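(* Fix $q\ge 2$ and $z\in\mathbb Z$. There exist an integer $N$ and a constant $C>0$ (independent of $n$) such that for all $n\ge N$, with $k=\lceil\log_q n\rceil+z$, $$\log_2 q-\frac{C}{n}\le E_{k,q}\le \log_2 q.$$
   Context: $\Sigma_q=\{0,\dots,q-1\}$. A vector in $\Sigma_q^m$ is a $k$-RLL vector if $m<k$ or it has no run of $k$ consecutive zeros; $a_q(m,k)$ is the number of such vectors. For fixed $k,q$, $E_{k,q}=\lim_{m\to\infty}\frac{\log_2 a_q(m,k)}{m}$ (this limit exists). *)

theory Defs
  imports Complex_Main
begin

text \<open>A vector in Sigma_q^m is represented as a list of length m with entries in {0..<q}.\<close>

definition has_zero_run :: "nat \<Rightarrow> nat list \<Rightarrow> bool" where
  "has_zero_run k xs \<longleftrightarrow> (\<exists>i. i + k \<le> length xs \<and> (\<forall>j<k. xs ! (i + j) = 0))"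

definition is_RLL :: "nat \<Rightarrow> nat list \<Rightarrow> bool" where
  "is_RLL k xs \<longleftrightarrow> length xs < k \<or> \<not> has_zero_run k xs"

definition a_RLL :: "nat \<Rightarrow> nat \<Rightarrow> nat \<Rightarrow> nat" where
  "a_RLL q m k = card {xs :: nat list. length xs = m \<and> set xs \<subseteq> {..<q} \<and> is_RLL k xs}"

definition E_RLL :: "nat \<Rightarrow> nat \<Rightarrow> real" where
  "E_RLL k q = lim (\<lambda>m. log 2 (real (a_RLL q m k)) / real m)"

end

(*
  Let a_m be the number of k-RLL words of length m. Splitting a word gives
  a_(m+n) <= a_m a_n, and joining two words by a nonzero symbol gives
  (q-1) a_m a_n <= a_(m+n+1). By Fekete's lemma log a_m / m converges, which
  makes E_(k,q) the limit, and E_(k,q) <= log q is immediate. The second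
  inequality says that m |-> log a_(m-1) + log (q-1) is superadditive, so
  E_(k,q) >= (log a_p + log (q-1)) / (p+1) for every p. For p = q^k div 2 a
  union bound over the positions of a zero run gives a_p >= q^p / 2, hence
  E_(k,q) >= log q - 4 / q^k. Finally k = ceil(log_q n) + z forces q^k >= n q^z.
*)

theory Submission
  imports Defs
begin

subsection \<open>Counting run-length-limited words\<close>

definition RLL_words :: "nat \<Rightarrow> nat \<Rightarrow> nat \<Rightarrow> nat list set" where
  "RLL_words q m k = {xs. length xs = m \<and> set xs \<subseteq> {..<q} \<and> is_RLL k xs}"

lemma a_RLL_eq_card: "a_RLL q m k = card (RLL_words q m k)"
  unfolding a_RLL_def RLL_words_def ..

lemma finite_RLL_words: "finite (RLL_words q m k)"
  by (rule finite_subset[OF _ finite_lists_length_eq[of "{..<q}" m]]) (auto simp: RLL_words_def)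

lemma is_RLL_iff_no_zero_run: "is_RLL k xs \<longleftrightarrow> \<not> has_zero_run k xs"
  unfolding is_RLL_def has_zero_run_def by auto

lemma has_zero_run_take:
  assumes "has_zero_run k (take m xs)"
  shows "has_zero_run k xs"
proof -
  obtain i where "i + k \<le> length (take m xs)" "\<forall>j<k. take m xs ! (i + j) = 0"
    using assms unfolding has_zero_run_def by blast
  then show ?thesis unfolding has_zero_run_def by (intro exI[of _ i]) auto
qed

lemma has_zero_run_drop:
  assumes "has_zero_run k (drop m xs)"
  shows "has_zero_run k xs"
proof -
  obtain i where i: "i + k \<le> length (drop m xs)" and zero: "\<forall>j<k. drop m xs ! (i + j) = 0"
    using assms unfolding has_zero_run_def by blast
  show ?thesis
  proof (cases "k = 0")
    case False
    with i have "m + i + k \<le> length xs" by simp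
    moreover have "\<forall>j<k. xs ! (m + i + j) = 0"
      using zero i False by (auto simp: add.assoc)
    ultimately show ?thesis unfolding has_zero_run_def by blast
  qed (auto simp: has_zero_run_def)
qed

lemma has_zero_run_append_Cons:
  assumes "has_zero_run k (xs @ c # ys)" "c \<noteq> 0"
  shows "has_zero_run k xs \<or> has_zero_run k ys"
proof -
  obtain i where i: "i + k \<le> length xs + length ys + 1"
    and zero: "\<And>j. j < k \<Longrightarrow> (xs @ c # ys) ! (i + j) = 0"
    using assms(1) unfolding has_zero_run_def by auto
  consider "i + k \<le> length xs" | "i \<le> length xs" "length xs < i + k" | "length xs < i"
    by linarith
  then show ?thesis
  proof cases
    case 1
    then have "has_zero_run k xs"
      unfolding has_zero_run_def using zero by (intro exI[of _ i]) (auto simp: nth_append)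
    then show ?thesis ..
  next
    case 2
    then have "(xs @ c # ys) ! (i + (length xs - i)) = 0" by (intro zero) simp
    with 2 assms(2) show ?thesis by (simp add: nth_append)
  next
    case 3
    have "has_zero_run k ys" unfolding has_zero_run_def
    proof (intro exI[of _ "i - length xs - 1"] conjI allI impI)
      show "i - length xs - 1 + k \<le> length ys" using i 3 by auto
      fix j assume "j < k"
      then have "(xs @ c # ys) ! (i + j) = 0" by (rule zero)
      moreover have "i + j - length xs = Suc (i - length xs - 1 + j)" using 3 by auto
      ultimately show "ys ! (i - length xs - 1 + j) = 0" using 3 by (simp add: nth_append)
    qed
    then show ?thesis ..
  qed
qed

lemma a_RLL_le_power: "a_RLL q m k \<le> q ^ m"
proof -
  have "card (RLL_words q m k) \<le> card {xs. set xs \<subseteq> {..<q} \<and> length xs = m}"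
    by (rule card_mono[OF finite_lists_length_eq]) (auto simp: RLL_words_def)
  then show ?thesis by (simp add: a_RLL_eq_card card_lists_length_eq)
qed

lemma a_RLL_pos:
  assumes "q \<ge> 2" "k \<ge> 1"
  shows "a_RLL q m k > 0"
proof -
  have "replicate m 1 \<in> RLL_words q m k"
    using assms unfolding RLL_words_def is_RLL_iff_no_zero_run has_zero_run_def
    by (auto intro!: exI[of _ 0])
  then show ?thesis
    using finite_RLL_words[of q m k] by (auto simp: a_RLL_eq_card card_gt_0_iff)
qed

lemma a_RLL_submult: "a_RLL q (m + n) k \<le> a_RLL q m k * a_RLL q n k"
proof -
  let ?split = "\<lambda>xs. (take m xs, drop m xs)"
  have "inj_on ?split (RLL_words q (m + n) k)"
    by (rule inj_onI) (metis append_take_drop_id prod.inject)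
  moreover have "?split ` RLL_words q (m + n) k \<subseteq> RLL_words q m k \<times> RLL_words q n k"
    by (auto simp: RLL_words_def is_RLL_iff_no_zero_run
        dest: has_zero_run_take has_zero_run_drop in_set_takeD in_set_dropD)
  ultimately have "card (RLL_words q (m + n) k) \<le> card (RLL_words q m k \<times> RLL_words q n k)"
    by (intro card_inj_on_le) (auto intro: finite_RLL_words)
  then show ?thesis by (simp add: a_RLL_eq_card card_cartesian_product)
qed

lemma a_RLL_supermult: "(q - 1) * a_RLL q m k * a_RLL q n k \<le> a_RLL q (m + n + 1) k"
proof -
  let ?glue = "\<lambda>(xs, c, ys). xs @ (c::nat) # ys"
  let ?D = "RLL_words q m k \<times> {1..<q} \<times> RLL_words q n k"
  have "inj_on ?glue ?D"
  proof (rule inj_onI)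
    fix s t assume s: "s \<in> ?D" and t: "t \<in> ?D" and eq: "?glue s = ?glue t"
    obtain xs c ys xs' c' ys' where st: "s = (xs, c, ys)" "t = (xs', c', ys')"
      by (cases s, cases t) auto
    have "length xs = length xs'" using s t st by (simp add: RLL_words_def)
    with eq st show "s = t" by (simp add: append_eq_append_conv)
  qed
  moreover have "?glue ` ?D \<subseteq> RLL_words q (m + n + 1) k"
  proof
    fix w assume "w \<in> ?glue ` ?D"
    then obtain xs c ys where w: "w = xs @ c # ys"
      and parts: "xs \<in> RLL_words q m k" "c \<in> {1..<q}" "ys \<in> RLL_words q n k"
      by auto
    then have "\<not> has_zero_run k w"
      by (auto simp: RLL_words_def is_RLL_iff_no_zero_run dest: has_zero_run_append_Cons)
    with w parts show "w \<in> RLL_words q (m + n + 1) k"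
      by (auto simp: RLL_words_def is_RLL_iff_no_zero_run)
  qed
  ultimately have "card ?D \<le> card (RLL_words q (m + n + 1) k)"
    by (rule card_inj_on_le[OF _ _ finite_RLL_words])
  then show ?thesis by (simp add: a_RLL_eq_card card_cartesian_product mult.left_commute)
qed

lemma card_zero_block_le:
  assumes "i + k \<le> m"
  shows "card {xs. length xs = m \<and> set xs \<subseteq> {..<q} \<and> (\<forall>j<k. xs ! (i + j) = 0)} \<le> q ^ (m - k)"
    (is "card ?S \<le> _")
proof -
  let ?insert_block = "\<lambda>ys. take i ys @ replicate k 0 @ drop i ys"
  let ?L = "{ys. set ys \<subseteq> {..<q} \<and> length ys = m - k}"
  have "?S \<subseteq> ?insert_block ` ?L"
  proof
    fix xs assume xs: "xs \<in> ?S"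
    then have "take k (drop i xs) = replicate k 0"
      using assms by (intro nth_equalityI) auto
    then have "xs = ?insert_block (take i xs @ drop (i + k) xs)"
      using xs assms by (simp add: min_def) (metis append_take_drop_id drop_drop add.commute)
    moreover have "take i xs @ drop (i + k) xs \<in> ?L"
      using xs assms by (auto dest: in_set_takeD in_set_dropD)
    ultimately show "xs \<in> ?insert_block ` ?L" by blast
  qed
  then have "card ?S \<le> card (?insert_block ` ?L)"
    by (intro card_mono finite_imageI finite_lists_length_eq) auto
  also have "\<dots> \<le> card ?L" by (rule card_image_le[OF finite_lists_length_eq]) simp
  finally show ?thesis by (simp add: card_lists_length_eq)
qed

lemma a_RLL_lower_bound:
  assumes "k \<ge> 1" "q > 0"
  shows "real q ^ m - real m * real q ^ m / real q ^ k \<le> real (a_RLL q m k)"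
proof -
  define B where "B = {xs. length xs = m \<and> set xs \<subseteq> {..<q} \<and> has_zero_run k xs}"
  have finite_B: "finite B"
    by (rule finite_subset[OF _ finite_lists_length_eq[of "{..<q}" m]]) (auto simp: B_def)
  have "{xs. set xs \<subseteq> {..<q} \<and> length xs = m} = RLL_words q m k \<union> B"
    by (auto simp: RLL_words_def B_def is_RLL_iff_no_zero_run)
  moreover have "card (RLL_words q m k \<union> B) = card (RLL_words q m k) + card B"
    by (rule card_Un_disjoint[OF finite_RLL_words finite_B])
      (auto simp: RLL_words_def B_def is_RLL_iff_no_zero_run)
  ultimately have total: "q ^ m = a_RLL q m k + card B"
    by (metis a_RLL_eq_card card_lists_length_eq card_lessThan finite_lessThan)
  have "card B * q ^ k \<le> m * q ^ m"
  proof (cases "k \<le> m")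
    case True
    let ?Z = "\<lambda>i. {xs. length xs = m \<and> set xs \<subseteq> {..<q} \<and> (\<forall>j<k. xs ! (i + j) = 0)}"
    have "B \<subseteq> (\<Union>i\<in>{..m - k}. ?Z i)"
      by (force simp: B_def has_zero_run_def)
    then have "card B \<le> card (\<Union>i\<in>{..m - k}. ?Z i)"
      by (intro card_mono finite_UN_I finite_atMost)
        (auto intro: finite_subset[OF _ finite_lists_length_eq[of "{..<q}" m]])
    also have "\<dots> \<le> (\<Sum>i\<le>m - k. card (?Z i))"
      by (rule card_UN_le) simp
    also have "\<dots> \<le> (\<Sum>i\<le>m - k. q ^ (m - k))"
      by (intro sum_mono card_zero_block_le) (use True in simp)
    also have "\<dots> = (m - k + 1) * q ^ (m - k)"
      by simp
    also have "\<dots> \<le> m * q ^ (m - k)"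
      using True assms(1) by (intro mult_right_mono) auto
    finally have "card B * q ^ k \<le> m * q ^ (m - k) * q ^ k"
      by simp
    also have "\<dots> = m * q ^ m"
      using True by (simp flip: power_add)
    finally show ?thesis .
  next
    case False
    then have "B = {}" by (auto simp: B_def has_zero_run_def)
    then show ?thesis by simp
  qed
  then have "real (card B) * real q ^ k \<le> real m * real q ^ m"
    by (metis of_nat_le_iff of_nat_mult of_nat_power)
  then have "real (card B) \<le> real m * real q ^ m / real q ^ k"
    using assms(2) by (simp add: field_simps)
  moreover have "real q ^ m = real (a_RLL q m k) + real (card B)"
    using total by (metis of_nat_add of_nat_power)
  ultimately show ?thesis by linarith
qed

subsection \<open>Subadditive and superadditive sequences\<close>

lemma Fekete_subadditive:
  fixes u :: "nat \<Rightarrow> real"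
  assumes sub: "\<And>m n. u (m + n) \<le> u m + u n" and nonneg: "\<And>n. u n \<ge> 0"
  shows "(\<lambda>n. u n / real n) \<longlonglongrightarrow> (INF n\<in>{1..}. u n / real n)"
proof -
  define L where "L = (INF n\<in>{1..}. u n / real n)"
  have bdd: "bdd_below ((\<lambda>n. u n / real n) ` {1..})"
    by (rule bdd_belowI[of _ 0]) (auto simp: nonneg)
  have L_le: "L \<le> u n / real n" if "n \<ge> 1" for n
    unfolding L_def using that by (intro cINF_lower[OF bdd]) auto
  have multiple: "u (j * p + r) \<le> real j * u p + u r" for j p r
  proof (induction j)
    case (Suc j)
    have "u (Suc j * p + r) \<le> u p + u (j * p + r)"
      using sub[of p "j * p + r"] by (simp add: add.assoc)
    then show ?case using Suc by (simp add: algebra_simps)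
  qed simp
  show ?thesis unfolding L_def[symmetric]
  proof (rule LIMSEQ_I)
    fix r :: real assume r: "r > 0"
    obtain p where p: "p \<ge> 1" "u p / real p < L + r / 2"
      using cINF_less_iff[OF _ bdd, of "L + r / 2"] r unfolding L_def[symmetric] by auto
    define M where "M = Max (u ` {..p})"
    have u_le_M: "u i \<le> M" if "i \<le> p" for i
      unfolding M_def using that by (intro Max_ge) auto
    obtain n0 :: nat where n0: "2 * M / r < real n0"
      using reals_Archimedean2 by blast
    show "\<exists>no. \<forall>n\<ge>no. norm (u n / real n - L) < r"
    proof (intro exI[of _ "max 1 n0"] allI impI)
      fix n assume n: "max 1 n0 \<le> n"
      then have n_pos: "real n > 0" by simp
      have "u n \<le> real (n div p) * u p + u (n mod p)"
        using multiple[of "n div p" p "n mod p"] by simp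
      also have "\<dots> \<le> (real n / real p) * u p + M"
        using p(1) by (intro add_mono mult_right_mono of_nat_div_le_of_nat nonneg u_le_M) simp_all
      finally have "u n / real n \<le> u p / real p + M / real n"
        using n_pos by (simp add: field_simps)
      moreover have "M / real n < r / 2"
        using n0 n r n_pos by (simp add: field_simps) (smt (verit) mult_left_mono of_nat_le_iff)
      ultimately have "u n / real n < L + r" using p(2) by linarith
      moreover have "L \<le> u n / real n" using L_le n by simp
      ultimately show "norm (u n / real n - L) < r" by simp
    qed
  qed
qed

lemma shifted_superadditive_limit_ge:
  fixes u :: "nat \<Rightarrow> real"
  assumes lim: "(\<lambda>n. u n / real n) \<longlonglongrightarrow> L"
    and super: "\<And>m n. u m + u n + g \<le> u (m + n + 1)"
  shows "(u p + g) / real (p + 1) \<le> L"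
proof -
  define c where "c = u p + g"
  have grow: "real (j + 1) * c - g \<le> u (j * (p + 1) + p)" for j
  proof (induction j)
    case (Suc j)
    have "u (j * (p + 1) + p) + u p + g \<le> u (Suc j * (p + 1) + p)"
      using super[of "j * (p + 1) + p" p] by (simp add: algebra_simps)
    with Suc show ?case by (simp add: c_def algebra_simps)
  qed (simp add: c_def)
  have "filterlim (\<lambda>j. j * (p + 1) + p) sequentially sequentially"
    by (intro filterlim_subseq strict_monoI) (simp add: add_less_le_mono)
  then have "(\<lambda>j. u (j * (p + 1) + p) / real (j * (p + 1) + p)) \<longlonglongrightarrow> L"
    using lim by (rule filterlim_compose[of "\<lambda>n. u n / real n", rotated])
  moreover have "(\<lambda>j. (real (j + 1) * c - g) / real (j * (p + 1) + p)) \<longlonglongrightarrow> c / real (p + 1)"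
  proof -
    have "(\<lambda>j. (c - g / real (Suc j)) / (real (p + 1) - 1 / real (Suc j)))
        \<longlonglongrightarrow> (c - 0) / (real (p + 1) - 0)"
      by (intro tendsto_intros LIMSEQ_Suc[OF lim_const_over_n]) auto
    moreover have "(c - g / real (Suc j)) / (real (p + 1) - 1 / real (Suc j))
        = (real (j + 1) * c - g) / real (j * (p + 1) + p)" for j
    proof -
      have "real (j * (p + 1) + p) = real (Suc j) * real (p + 1) - 1"
        by (simp add: algebra_simps)
      then show ?thesis
        by (simp add: divide_simps del: of_nat_Suc of_nat_add) (simp add: algebra_simps)
    qed
    ultimately show ?thesis by simp
  qed
  moreover have "\<forall>j. (real (j + 1) * c - g) / real (j * (p + 1) + p)
      \<le> u (j * (p + 1) + p) / real (j * (p + 1) + p)"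
    using grow by (blast intro: divide_right_mono of_nat_0_le_iff)
  ultimately have "c / real (p + 1) \<le> L"
    by (intro tendsto_le[OF _ _ _ always_eventually]) simp_all
  then show ?thesis unfolding c_def .
qed

subsection \<open>The capacity\<close>

lemma log_a_RLL_subadditive:
  assumes "q \<ge> 2" "k \<ge> 1"
  shows "log 2 (a_RLL q (m + n) k) \<le> log 2 (a_RLL q m k) + log 2 (a_RLL q n k)"
proof -
  have "log 2 (a_RLL q (m + n) k) \<le> log 2 (real (a_RLL q m k) * real (a_RLL q n k))"
    using a_RLL_submult[of q m n k] a_RLL_pos[OF assms]
    by (intro log_mono) (simp_all flip: of_nat_mult)
  then show ?thesis
    using a_RLL_pos[OF assms] by (simp add: log_mult)
qed

lemma log_a_RLL_superadditive:
  assumes "q \<ge> 2" "k \<ge> 1"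
  shows "log 2 (a_RLL q m k) + log 2 (a_RLL q n k) + log 2 (q - 1) \<le> log 2 (a_RLL q (m + n + 1) k)"
proof -
  have "real ((q - 1) * a_RLL q m k * a_RLL q n k) \<le> real (a_RLL q (m + n + 1) k)"
    by (simp only: of_nat_le_iff) (rule a_RLL_supermult)
  then have "log 2 (real (q - 1) * real (a_RLL q m k) * real (a_RLL q n k))
      \<le> log 2 (a_RLL q (m + n + 1) k)"
    using a_RLL_pos[OF assms] assms(1) by (intro log_mono) (simp_all del: of_nat_diff)
  then show ?thesis
    using a_RLL_pos[OF assms] assms(1) by (simp add: log_mult del: of_nat_diff)
qed

lemma log_a_RLL_limit:
  assumes "q \<ge> 2" "k \<ge> 1"
  shows "(\<lambda>m. log 2 (a_RLL q m k) / real m) \<longlonglongrightarrow> E_RLL k q"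
proof -
  have "(\<lambda>m. log 2 (a_RLL q m k) / real m) \<longlonglongrightarrow> (INF m\<in>{1..}. log 2 (a_RLL q m k) / real m)"
    by (rule Fekete_subadditive[OF log_a_RLL_subadditive[OF assms]])
      (use a_RLL_pos[OF assms] in \<open>simp add: Suc_le_eq\<close>)
  then show ?thesis
    unfolding E_RLL_def by (metis limI)
qed

lemma E_RLL_le_log:
  assumes "q \<ge> 2" "k \<ge> 1"
  shows "E_RLL k q \<le> log 2 q"
proof (rule LIMSEQ_le_const2[OF log_a_RLL_limit[OF assms]], intro exI allI impI)
  fix m :: nat assume "m \<ge> 1"
  have "log 2 (a_RLL q m k) \<le> log 2 (real q ^ m)"
    using a_RLL_le_power[of q m k] a_RLL_pos[OF assms]
    by (intro log_mono) (simp_all flip: of_nat_power)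
  then show "log 2 (a_RLL q m k) / real m \<le> log 2 q"
    using \<open>m \<ge> 1\<close> assms(1) by (simp add: log_nat_power field_simps)
qed

lemma E_RLL_ge_log:
  assumes "q \<ge> 2" "k \<ge> 1"
  shows "log 2 q - 4 / real q ^ k \<le> E_RLL k q"
proof -
  define p where "p = q ^ k div 2"
  have q_pow_pos: "real q ^ k > 0" using assms(1) by simp
  have "2 * p \<le> q ^ k" "q ^ k \<le> 2 * (p + 1)"
    unfolding p_def by simp_all
  then have p_le: "2 * real p \<le> real q ^ k" and p_ge: "real q ^ k \<le> 2 * real (p + 1)"
    by (simp_all flip: of_nat_power of_nat_mult)
  have "real q ^ p / 2 \<le> real (a_RLL q p k)"
  proof -
    have "2 * real p * real q ^ p \<le> real q ^ k * real q ^ p"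
      using p_le by (intro mult_right_mono) simp_all
    then have "real p * real q ^ p / real q ^ k \<le> real q ^ p / 2"
      using q_pow_pos by (simp add: field_simps)
    then show ?thesis
      using a_RLL_lower_bound[OF assms(2), of q p] assms(1) by simp
  qed
  then have "log 2 (real q ^ p / 2) \<le> log 2 (a_RLL q p k)"
    using assms(1) by (intro log_mono) simp_all
  then have u_p: "real p * log 2 q - 1 \<le> log 2 (a_RLL q p k)"
    using assms(1) by (simp add: log_divide log_nat_power)
  have "log 2 q \<le> log 2 (2 * real (q - 1))"
    using assms(1) by (intro log_mono) auto
  also have "\<dots> = 1 + log 2 (q - 1)"
    using assms(1) by (subst log_mult) auto
  finally have g: "log 2 q - 1 \<le> log 2 (q - 1)"
    by simp
  have "real (p + 1) * log 2 q - 2 \<le> log 2 (a_RLL q p k) + log 2 (q - 1)"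
    using u_p g by (simp add: algebra_simps)
  then have "(real (p + 1) * log 2 q - 2) / real (p + 1)
      \<le> (log 2 (a_RLL q p k) + log 2 (q - 1)) / real (p + 1)"
    by (rule divide_right_mono) simp
  then have "log 2 q - 2 / real (p + 1) \<le> (log 2 (a_RLL q p k) + log 2 (q - 1)) / real (p + 1)"
    by (simp add: diff_divide_distrib del: of_nat_add of_nat_Suc)
  moreover have "\<dots> \<le> E_RLL k q"
    by (intro shifted_superadditive_limit_ge[OF log_a_RLL_limit[OF assms]] log_a_RLL_superadditive[OF assms])
  moreover have "2 / real (p + 1) \<le> 4 / real q ^ k"
    using p_ge q_pow_pos by (simp add: field_simps)
  ultimately show ?thesis by linarith
qed

lemma power_nat_ceiling_log_ge:
  fixes r x :: real
  assumes "r > 1" "x > 0" "\<lceil>log r x\<rceil> + z \<ge> 0"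
  shows "x * r powr real_of_int z \<le> r ^ nat (\<lceil>log r x\<rceil> + z)"
proof -
  have "x * r powr real_of_int z = r powr (log r x + real_of_int z)"
    using assms(1,2) by (simp add: powr_add)
  also have "\<dots> \<le> r powr real_of_int (\<lceil>log r x\<rceil> + z)"
    using assms(1) by (intro powr_mono) auto
  also have "\<dots> = r powr real (nat (\<lceil>log r x\<rceil> + z))"
    by (simp only: of_nat_nat[OF assms(3)])
  also have "\<dots> = r ^ nat (\<lceil>log r x\<rceil> + z)"
    using assms(1) by (simp add: powr_realpow)
  finally show ?thesis .
qed

lemma ceiling_log_plus_ge_1:
  fixes r x :: real
  assumes "r > 1" "r powr (1 - real_of_int z) < x"
  shows "\<lceil>log r x\<rceil> + z \<ge> 1"
proof -
  have "r powr (1 - real_of_int z) > 0"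
    using assms(1) by simp
  with assms(2) have "x > 0" by linarith
  then have "1 - real_of_int z < log r x"
    using assms by (simp add: less_log_iff)
  then show ?thesis by linarith
qed

theorem lemma3:
  fixes q :: nat and z :: int
  assumes "q \<ge> 2"
  shows "\<exists>(N::nat) (C::real). C > 0 \<and>
    (\<forall>n::nat. n \<ge> N \<longrightarrow>
      (let k = nat (\<lceil>log (real q) (real n)\<rceil> + z) in
        log 2 (real q) - C / real n \<le> E_RLL k q \<and> E_RLL k q \<le> log 2 (real q)))"
proof -
  define C where "C = 4 / real q powr real_of_int z"
  define N where "N = nat \<lceil>real q powr (1 - real_of_int z)\<rceil> + 1"
  have "C > 0" using assms unfolding C_def by simp
  moreover have "log 2 q - C / real n \<le> E_RLL k q \<and> E_RLL k q \<le> log 2 q"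
    if "n \<ge> N" and k: "k = nat (\<lceil>log (real q) (real n)\<rceil> + z)" for n k
  proof -
    from \<open>n \<ge> N\<close> have n_large: "real q powr (1 - real_of_int z) < real n"
      unfolding N_def by linarith
    moreover have "real q powr (1 - real_of_int z) > 0"
      using assms by simp
    ultimately have n_pos: "real n > 0" by linarith
    have k_ge: "\<lceil>log (real q) (real n)\<rceil> + z \<ge> 1"
      using n_large assms by (intro ceiling_log_plus_ge_1) auto
    have "real n * real q powr real_of_int z \<le> real q ^ k"
      unfolding k using assms n_pos k_ge by (intro power_nat_ceiling_log_ge) auto
    then have "4 / real q ^ k \<le> 4 / (real n * real q powr real_of_int z)"
      using assms n_pos by (intro divide_left_mono mult_pos_pos) auto
    then have "4 / real q ^ k \<le> C / real n"
      unfolding C_def by (simp add: mult.commute)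
    moreover have "k \<ge> 1" using k_ge unfolding k by linarith
    ultimately show ?thesis
      using E_RLL_ge_log[OF assms] E_RLL_le_log[OF assms] by fastforce
  qed
  ultimately show ?thesis
    unfolding Let_def by blast
qed

end
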